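(* Let $S$ be a numerical semigroup with multiplicity $e$ and blowup $B$. If ${\rm adj}(S)=\operatorname{Ap}(B;e)$, then ${\rm d}_{\max}(S)=\max\{d(f;B^{\mathcal D}): f\in\operatorname{maxAp}(B;e)\}$.
   Context: $S$ is a numerical semigroup (a submonoid of $\mathbb N$ with finite complement) with minimal generators $e<a_1<\dots<a_t$. An $S$-factorization of $n$ is $(c_0,\dots,c_t)\in\mathbb N^{t+1}$ with $c_0e+\sum c_ia_i=n$, of length $\sum c_i$. ${\rm ord}(n;S)$ is the maximal such length, ${\rm d}_{\max}(n;S)$ is the number of factorizations of maximal length, and ${\rm d}_{\max}(S)=\max_{n\in S}{\rm d}_{\max}(n;S)$. ${\rm adj}(S)=\{s-{\rm ord}(s;S)e:s\in S\}$. The blowup is $B=\langle e,d_1,\dots,d_t\rangle$ with $d_i=a_i-e$, and $\mathcal D=(e,d_1,\dots,d_t)$. $d(b;B^{\mathcal D})$ is the number of tuples $(x_0,\dots,x_t)\in\mathbb N^{t+1}$ with $x_0e+\sum x_id_i=b$. $\operatorname{Ap}(B;e)=\{w\in B:w-e\notin B\}$, and $\operatorname{maxAp}(B;e)$ is the set of elements of $\operatorname{Ap}(B;e)\setminus\{0\}$ that are maximal with respect to the partial order $w\preceq w'$ iff $w'-w\in B$. *)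

theory Defs
  imports Main
begin

definition numerical_semigroup :: "nat set \<Rightarrow> bool" where
  "numerical_semigroup S \<longleftrightarrow> 0 \<in> S \<and> (\<forall>x\<in>S. \<forall>y\<in>S. x + y \<in> S) \<and> finite (UNIV - S)"

definition mingens :: "nat set \<Rightarrow> nat set" where
  "mingens S = {a \<in> S. a \<noteq> 0 \<and> \<not> (\<exists>x\<in>S. \<exists>y\<in>S. x \<noteq> 0 \<and> y \<noteq> 0 \<and> a = x + y)}"

definition multiplicity_ns :: "nat set \<Rightarrow> nat" where
  "multiplicity_ns S = (LEAST n. n \<in> S \<and> n \<noteq> 0)"

text \<open>Representations of b as a nonnegative combination of weights w a, a ranging over the
  finite index set A (tuples indexed by A, zero outside A).\<close>
definition reps :: "nat set \<Rightarrow> (nat \<Rightarrow> nat) \<Rightarrow> nat \<Rightarrow> (nat \<Rightarrow> nat) set" where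
  "reps A w b = {x. (\<forall>a. a \<notin> A \<longrightarrow> x a = 0) \<and> (\<Sum>a\<in>A. x a * w a) = b}"

definition factorizations :: "nat set \<Rightarrow> nat \<Rightarrow> (nat \<Rightarrow> nat) set" where
  "factorizations S n = reps (mingens S) id n"

definition fact_length :: "nat set \<Rightarrow> (nat \<Rightarrow> nat) \<Rightarrow> nat" where
  "fact_length S c = (\<Sum>a\<in>mingens S. c a)"

definition ord_ns :: "nat set \<Rightarrow> nat \<Rightarrow> nat" where
  "ord_ns S n = Max (fact_length S ` factorizations S n)"

definition dmax_elem :: "nat set \<Rightarrow> nat \<Rightarrow> nat" where
  "dmax_elem S n = card {c \<in> factorizations S n. fact_length S c = ord_ns S n}"

definition dmax_ns :: "nat set \<Rightarrow> nat" where
  "dmax_ns S = Max (dmax_elem S ` S)"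

definition adj :: "nat set \<Rightarrow> nat set" where
  "adj S = {s - ord_ns S s * multiplicity_ns S | s. s \<in> S}"

definition blowup_weight :: "nat set \<Rightarrow> nat \<Rightarrow> nat" where
  "blowup_weight S a = (if a = multiplicity_ns S then a else a - multiplicity_ns S)"

text \<open>d(b; B^D): number of tuples (x_0,...,x_t) with x_0 e + sum x_i d_i = b.\<close>
definition dD :: "nat set \<Rightarrow> nat \<Rightarrow> nat" where
  "dD S b = card (reps (mingens S) (blowup_weight S) b)"

definition blowup :: "nat set \<Rightarrow> nat set" where
  "blowup S = {b. reps (mingens S) (blowup_weight S) b \<noteq> {}}"

text \<open>Apery set Ap(B;m) = {w in B. w - m not in B} (w - m taken in the integers).\<close>
definition apery :: "nat set \<Rightarrow> nat \<Rightarrow> nat set" where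
  "apery B m = {w \<in> B. \<not> (m \<le> w \<and> w - m \<in> B)}"

definition preceq :: "nat set \<Rightarrow> nat \<Rightarrow> nat \<Rightarrow> bool" where
  "preceq B w w' \<longleftrightarrow> w \<le> w' \<and> w' - w \<in> B"

definition maxAp :: "nat set \<Rightarrow> nat \<Rightarrow> nat set" where
  "maxAp B m = {w \<in> apery B m - {0}. \<forall>w' \<in> apery B m - {0}. preceq B w w' \<longrightarrow> w' = w}"

end

theory Submission
  imports Defs
begin

text \<open>Deleting the e-coordinate of a factorization of n of maximal length turns it into a
  representation of n - ord(n) e by the blowup weights, injectively; so
  d_max(n) \<le> d(n - ord(n) e), and by hypothesis n - ord(n) e lies in Ap(B;e), below some
  element of maxAp(B;e), while d is monotone for \<preceq>. Conversely, a representation of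
  f \<in> Ap(B;e) never uses e. If K is the largest length of such a representation, refilling the
  e-coordinate up to K maps them injectively to factorizations of f + K e of length K, and K is
  the order of f + K e because no f - j e with j > 0 lies in B.\<close>

lemma finite_reps:
  assumes "finite A" and "\<And>a. a \<in> A \<Longrightarrow> 0 < w a"
  shows "finite (reps A w b)"
proof -
  have "reps A w b \<subseteq> {x. \<forall>a. (a \<in> A \<longrightarrow> x a \<in> {..b}) \<and> (a \<notin> A \<longrightarrow> x a = 0)}"
  proof
    fix x assume x: "x \<in> reps A w b"
    have "x a \<le> b" if "a \<in> A" for a
    proof -
      have "x a \<le> x a * w a" using assms(2)[OF that] by simp
      also have "\<dots> \<le> (\<Sum>a\<in>A. x a * w a)"
        using assms(1) that by (intro member_le_sum) auto
      finally show ?thesis using x by (simp add: reps_def)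
    qed
    with x show "x \<in> {x. \<forall>a. (a \<in> A \<longrightarrow> x a \<in> {..b}) \<and> (a \<notin> A \<longrightarrow> x a = 0)}"
      by (auto simp: reps_def)
  qed
  moreover have "finite {x. \<forall>a. (a \<in> A \<longrightarrow> x a \<in> {..b}) \<and> (a \<notin> A \<longrightarrow> x a = (0::nat))}"
    using assms(1) by (intro finite_set_of_finite_funs) auto
  ultimately show ?thesis by (rule finite_subset)
qed

lemma reps_add:
  assumes "x \<in> reps A w b" and "y \<in> reps A w c"
  shows "(\<lambda>a. x a + y a) \<in> reps A w (b + c)"
  using assms by (auto simp: reps_def algebra_simps sum.distrib)

lemma card_reps_mono:
  assumes "finite A" and "\<And>a. a \<in> A \<Longrightarrow> 0 < w a" and "y \<in> reps A w c"
  shows "card (reps A w b) \<le> card (reps A w (b + c))"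
proof (rule card_inj_on_le)
  show "inj_on (\<lambda>x a. x a + y a) (reps A w b)"
    by (rule inj_onI) (metis add_right_cancel ext)
  show "(\<lambda>x a. x a + y a) ` reps A w b \<subseteq> reps A w (b + c)"
    using reps_add assms(3) by blast
  show "finite (reps A w (b + c))"
    using assms(1,2) by (rule finite_reps)
qed

lemma reps_decrement:
  assumes x: "x \<in> reps A w v" and "finite A" "a \<in> A" "0 < x a"
  shows "x(a := x a - 1) \<in> reps A w (v - w a)" and "w a \<le> v"
proof -
  let ?rest = "\<Sum>b\<in>A - {a}. x b * w b"
  have v: "v = x a * w a + ?rest"
    using x sum.remove[OF assms(2,3), of "\<lambda>b. x b * w b"] by (simp add: reps_def)
  have "(\<Sum>b\<in>A. (x(a := x a - 1)) b * w b) = (x a - 1) * w a + ?rest"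
    using sum.remove[OF assms(2,3), of "\<lambda>b. (x(a := x a - 1)) b * w b"]
    by (simp add: sum.cong[of "A - {a}" "A - {a}" "\<lambda>b. (x(a := x a - 1)) b * w b"])
  moreover have "x a * w a = (x a - 1) * w a + w a"
    using \<open>0 < x a\<close> by (cases "x a") auto
  ultimately show "x(a := x a - 1) \<in> reps A w (v - w a)" and "w a \<le> v"
    using x v \<open>a \<in> A\<close> by (auto simp: reps_def)
qed

lemma zero_mem_blowup: "0 \<in> blowup S"
  by (auto simp: blowup_def reps_def intro!: exI[of _ "\<lambda>_. 0"])

lemma blowup_add: "x \<in> blowup S \<Longrightarrow> y \<in> blowup S \<Longrightarrow> x + y \<in> blowup S"
  unfolding blowup_def using reps_add by blast

lemma add_multiple_mem:
  fixes B :: "nat set"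
  assumes shift: "\<And>x. x \<in> B \<Longrightarrow> x + m \<in> B" and "x \<in> B"
  shows "x + k * m \<in> B"
proof (induction k)
  case (Suc k)
  from shift[OF Suc] show ?case by (simp add: algebra_simps)
qed (simp add: \<open>x \<in> B\<close>)

lemma apery_diff_multiple_notin:
  assumes shift: "\<And>x. x \<in> B \<Longrightarrow> x + m \<in> B"
    and v: "v \<in> apery B m" and "0 < j" and "j * m \<le> v"
  shows "v - j * m \<notin> B"
proof
  assume "v - j * m \<in> B"
  then have "v - j * m + (j - 1) * m \<in> B" using add_multiple_mem[of B m] shift by blast
  moreover have "j * m = (j - 1) * m + m" using \<open>0 < j\<close> by (cases j) auto
  ultimately show False using v \<open>j * m \<le> v\<close> by (auto simp: apery_def)
qed

lemma finite_apery:
  assumes shift: "\<And>x. x \<in> B \<Longrightarrow> x + m \<in> B" and "0 < m"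
  shows "finite (apery B m)"
proof -
  have "v mod m \<noteq> v' mod m" if "v \<in> apery B m" "v' \<in> apery B m" "v < v'" for v v'
  proof
    assume "v mod m = v' mod m"
    then have "m dvd v' - v" using mod_eq_dvd_iff_nat[of v v' m] \<open>v < v'\<close> by (simp add: eq_commute)
    then obtain j where j: "v' - v = j * m" by (metis dvdE mult.commute)
    with \<open>v < v'\<close> have "0 < j" by (cases j) auto
    have "v' - j * m \<notin> B"
      using apery_diff_multiple_notin[OF shift \<open>v' \<in> apery B m\<close> \<open>0 < j\<close>] j by simp
    moreover have "v' - j * m = v" using j \<open>v < v'\<close> by linarith
    ultimately show False using \<open>v \<in> apery B m\<close> by (simp add: apery_def)
  qed
  then have "inj_on (\<lambda>v. v mod m) (apery B m)" by (intro linorder_inj_onI') auto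
  moreover have "(\<lambda>v. v mod m) ` apery B m \<subseteq> {..<m}" using \<open>0 < m\<close> by auto
  ultimately show ?thesis by (meson finite_imageD finite_lessThan finite_subset)
qed

lemma preceq_refl: "0 \<in> B \<Longrightarrow> preceq B w w"
  by (simp add: preceq_def)

lemma preceq_trans:
  assumes "\<And>x y. x \<in> B \<Longrightarrow> y \<in> B \<Longrightarrow> x + y \<in> B"
    and "preceq B u v" and "preceq B v w"
  shows "preceq B u w"
proof -
  have "(w - v) + (v - u) \<in> B" using assms unfolding preceq_def by blast
  moreover have "(w - v) + (v - u) = w - u" using assms(2,3) by (simp add: preceq_def)
  ultimately show ?thesis using assms(2,3) by (simp add: preceq_def)
qed

lemma ex_maxAp_above_nonzero:
  assumes fin: "finite (apery B m)" and "0 \<in> B"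
    and add: "\<And>x y. x \<in> B \<Longrightarrow> y \<in> B \<Longrightarrow> x + y \<in> B"
    and v: "v \<in> apery B m - {0}"
  shows "\<exists>f\<in>maxAp B m. preceq B v f"
proof -
  let ?U = "{u \<in> apery B m - {0}. preceq B v u}"
  have "finite ?U" using fin by auto
  moreover have "v \<in> ?U" using v preceq_refl[OF \<open>0 \<in> B\<close>] by blast
  ultimately have f: "Max ?U \<in> ?U" and greatest: "\<And>u. u \<in> ?U \<Longrightarrow> u \<le> Max ?U"
    using Max_in[of ?U] Max_ge[of ?U] by blast+
  have "Max ?U \<in> maxAp B m"
  proof (unfold maxAp_def, intro CollectI conjI ballI impI)
    fix u assume u: "u \<in> apery B m - {0}" and "preceq B (Max ?U) u"
    with f have "u \<in> ?U" using preceq_trans[OF add] by blast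
    then show "u = Max ?U"
      using greatest \<open>preceq B (Max ?U) u\<close> by (simp add: preceq_def le_antisym)
  qed (use f in blast)
  with f show ?thesis by blast
qed

lemma ex_maxAp_above:
  assumes fin: "finite (apery B m)" and "0 \<in> B"
    and add: "\<And>x y. x \<in> B \<Longrightarrow> y \<in> B \<Longrightarrow> x + y \<in> B"
    and nonzero: "apery B m - {0} \<noteq> {}" and v: "v \<in> apery B m"
  shows "\<exists>f\<in>maxAp B m. preceq B v f"
proof (cases "v = 0")
  case True
  obtain u where "u \<in> apery B m - {0}" using nonzero by blast
  then obtain f where f: "f \<in> maxAp B m" by (metis ex_maxAp_above_nonzero[OF fin \<open>0 \<in> B\<close> add])
  then have "preceq B 0 f" by (simp add: preceq_def maxAp_def apery_def)
  with f True show ?thesis by blast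
qed (use ex_maxAp_above_nonzero[OF fin \<open>0 \<in> B\<close> add] v in blast)

lemma finite_Max_eq_if_cofinal:
  fixes A C :: "nat set"
  assumes "A \<noteq> {}" and "finite C" and "C \<noteq> {}"
    and AC: "\<And>a. a \<in> A \<Longrightarrow> \<exists>c\<in>C. a \<le> c" and CA: "\<And>c. c \<in> C \<Longrightarrow> \<exists>a\<in>A. c \<le> a"
  shows "finite A \<and> Max A = Max C"
proof -
  have below: "a \<le> Max C" if "a \<in> A" for a
    using AC[OF that] Max_ge[OF \<open>finite C\<close>] le_trans by blast
  then have "finite A" by (meson atMost_iff finite_atMost finite_subset subsetI)
  have "c \<le> Max A" if "c \<in> C" for c
    using CA[OF that] Max_ge[OF \<open>finite A\<close>] le_trans by blast
  with below have "Max A \<le> Max C" and "Max C \<le> Max A"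
    using \<open>finite A\<close> \<open>finite C\<close> assms(1,3) by simp_all
  with \<open>finite A\<close> show ?thesis by simp
qed

locale proper_numerical_semigroup =
  fixes S :: "nat set"
  assumes numerical_semigroup: "numerical_semigroup S" and proper: "S \<noteq> UNIV"
begin

abbreviation "e \<equiv> multiplicity_ns S"
abbreviation "G \<equiv> mingens S"
abbreviation "w \<equiv> blowup_weight S"
abbreviation "B \<equiv> blowup S"

lemma zero_mem: "0 \<in> S" and add_mem: "x \<in> S \<Longrightarrow> y \<in> S \<Longrightarrow> x + y \<in> S"
  using numerical_semigroup by (auto simp: numerical_semigroup_def)

lemma ex_conductor_bound: "\<exists>F. \<forall>x>F. x \<in> S"
proof -
  have "finite (UNIV - S)" using numerical_semigroup by (simp add: numerical_semigroup_def)
  then obtain F where "\<forall>n\<in>UNIV - S. n \<le> F" using finite_nat_set_iff_bounded_le by blast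
  then show ?thesis by (metis DiffI UNIV_I not_le)
qed

lemma multiplicity_mem: "e \<in> S" and multiplicity_pos: "0 < e"
  and multiplicity_le: "x \<in> S \<Longrightarrow> x \<noteq> 0 \<Longrightarrow> e \<le> x"
proof -
  obtain F where "\<forall>x>F. x \<in> S" using ex_conductor_bound by blast
  then have "Suc F \<in> S \<and> Suc F \<noteq> 0" by simp
  from LeastI[of "\<lambda>n. n \<in> S \<and> n \<noteq> 0", OF this]
  show "e \<in> S" "0 < e" by (auto simp: multiplicity_ns_def)
  show "x \<in> S \<Longrightarrow> x \<noteq> 0 \<Longrightarrow> e \<le> x"
    unfolding multiplicity_ns_def by (rule Least_le) simp
qed

lemma two_le_multiplicity: "2 \<le> e"
proof (rule ccontr)
  assume "\<not> 2 \<le> e"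
  with multiplicity_pos have "e = 1" by simp
  with multiplicity_mem have one: "1 \<in> S" by simp
  have "n \<in> S" for n
  proof (induction n)
    case (Suc n)
    from add_mem[OF Suc one] show ?case by simp
  qed (rule zero_mem)
  with proper show False by auto
qed

lemma mingens_mem: "a \<in> G \<Longrightarrow> a \<in> S" and mingens_ge: "a \<in> G \<Longrightarrow> e \<le> a"
  using multiplicity_le by (auto simp: mingens_def)

lemma multiplicity_mem_mingens: "e \<in> G"
proof -
  have "e \<noteq> x + y" if "x \<in> S" "y \<in> S" "x \<noteq> 0" "y \<noteq> 0" for x y
    using multiplicity_le[OF that(1,3)] multiplicity_le[OF that(2,4)] multiplicity_pos by linarith
  then show ?thesis unfolding mingens_def using multiplicity_mem multiplicity_pos by blast
qed

lemma finite_mingens: "finite G"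
proof -
  obtain F where F: "\<forall>x>F. x \<in> S" using ex_conductor_bound by blast
  have "a \<le> F + e" if "a \<in> G" for a
  proof (rule ccontr)
    assume "\<not> a \<le> F + e"
    then have "e \<in> S \<and> a - e \<in> S \<and> e \<noteq> 0 \<and> a - e \<noteq> 0 \<and> a = e + (a - e)"
      using F multiplicity_mem multiplicity_pos by auto
    with that show False unfolding mingens_def by blast
  qed
  then show ?thesis by (meson finite_atMost finite_subset subsetI atMost_iff)
qed

lemma blowup_weight_pos: "a \<in> G \<Longrightarrow> 0 < w a"
  using mingens_ge[of a] multiplicity_pos by (auto simp: blowup_weight_def)

lemma finite_blowup_reps: "finite (reps G w b)"
  using finite_mingens blowup_weight_pos by (rule finite_reps)

lemma finite_factorizations: "finite (factorizations S n)"
  unfolding factorizations_def using finite_mingens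
  by (rule finite_reps) (simp add: mingens_def)

lemma mem_if_factorization: "c \<in> factorizations S n \<Longrightarrow> n \<in> S"
proof -
  have mult: "k * a \<in> S" if "a \<in> S" for k a
    using that by (induction k) (auto intro: zero_mem add_mem)
  have "(\<Sum>a\<in>A. c a * a) \<in> S" if "finite A" "A \<subseteq> G" for A
    using that by (induction A rule: finite_induct) (auto intro: zero_mem add_mem mult mingens_mem)
  then show "c \<in> factorizations S n \<Longrightarrow> n \<in> S"
    using finite_mingens by (auto simp: factorizations_def reps_def)
qed

lemma factorizations_nonempty: "n \<in> S \<Longrightarrow> factorizations S n \<noteq> {}"
proof (induction n rule: less_induct)
  case (less n)
  consider "n = 0" | "n \<in> G" | x y where "x \<in> S" "y \<in> S" "x \<noteq> 0" "y \<noteq> 0" "n = x + y"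
    using less.prems by (auto simp: mingens_def)
  then show ?case
  proof cases
    case 1
    then have "(\<lambda>_. 0) \<in> factorizations S n" by (auto simp: factorizations_def reps_def)
    then show ?thesis by blast
  next
    case 2
    have "(\<Sum>a\<in>G. (if a = n then 1 else 0) * id a) = (\<Sum>a\<in>G. if a = n then n else 0)"
      by (rule sum.cong) auto
    also have "\<dots> = n" using 2 finite_mingens by simp
    finally have "(\<Sum>a\<in>G. (if a = n then 1 else 0) * id a) = n" .
    then have "(\<lambda>a. if a = n then 1 else 0) \<in> factorizations S n"
      using 2 by (auto simp: factorizations_def reps_def)
    then show ?thesis by blast
  next
    case 3
    then have "x < n" "y < n" by simp_all
    with less.IH \<open>x \<in> S\<close> \<open>y \<in> S\<close>
    obtain c1 c2 where "c1 \<in> factorizations S x" "c2 \<in> factorizations S y" by blast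
    then have "(\<lambda>a. c1 a + c2 a) \<in> factorizations S n"
      using reps_add \<open>n = x + y\<close> by (auto simp: factorizations_def)
    then show ?thesis by blast
  qed
qed

lemma ord_ns_attained: "n \<in> S \<Longrightarrow> \<exists>c\<in>factorizations S n. fact_length S c = ord_ns S n"
  and fact_length_le_ord_ns: "c \<in> factorizations S n \<Longrightarrow> fact_length S c \<le> ord_ns S n"
proof -
  have fin: "finite (fact_length S ` factorizations S n)" using finite_factorizations by simp
  show "\<exists>c\<in>factorizations S n. fact_length S c = ord_ns S n" if "n \<in> S"
  proof -
    have "fact_length S ` factorizations S n \<noteq> {}" using factorizations_nonempty[OF that] by blast
    from Max_in[OF fin this] show ?thesis unfolding ord_ns_def by (metis imageE)
  qed
  show "c \<in> factorizations S n \<Longrightarrow> fact_length S c \<le> ord_ns S n"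
    using Max_ge[OF fin] unfolding ord_ns_def by simp
qed

lemma fact_length_fun_upd_multiplicity: "fact_length S c = c e + fact_length S (c(e := 0))"
  using sum.remove[OF finite_mingens multiplicity_mem_mingens, of c]
    sum.remove[OF finite_mingens multiplicity_mem_mingens, of "c(e := 0)"]
  by (simp add: fact_length_def sum.cong[of "G - {e}" "G - {e}" "c(e := 0)" c])

lemma factorization_sum_split:
  "(\<Sum>a\<in>G. c a * a) = (\<Sum>a\<in>G. (c(e := 0)) a * w a) + fact_length S c * e"
proof -
  have "c a * a = (c(e := 0)) a * w a + c a * e" if "a \<in> G" for a
  proof (cases "a = e")
    case False
    then have "a = (a - e) + e" and "w a = a - e"
      using mingens_ge[OF that] by (auto simp: blowup_weight_def)
    then show ?thesis using False by (metis distrib_left fun_upd_other)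
  qed simp
  then have "(\<Sum>a\<in>G. c a * a) = (\<Sum>a\<in>G. (c(e := 0)) a * w a + c a * e)"
    by (rule sum.cong[OF refl])
  then show ?thesis by (simp add: sum.distrib sum_distrib_right fact_length_def)
qed

lemma factorization_to_blowup_rep:
  assumes "c \<in> factorizations S n"
  shows "c(e := 0) \<in> reps G w (n - fact_length S c * e)" and "fact_length S c * e \<le> n"
  using assms factorization_sum_split[of c] multiplicity_mem_mingens
  by (auto simp: factorizations_def reps_def)

lemma ord_ns_mult_le: "n \<in> S \<Longrightarrow> ord_ns S n * e \<le> n"
  using ord_ns_attained factorization_to_blowup_rep(2) by metis

lemma dmax_elem_le_dD: "dmax_elem S n \<le> dD S (n - ord_ns S n * e)"
proof -
  let ?M = "{c \<in> factorizations S n. fact_length S c = ord_ns S n}"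
  have "inj_on (\<lambda>c. c(e := 0)) ?M"
  proof (rule inj_onI)
    fix c c' assume "c \<in> ?M" "c' \<in> ?M" and eq: "c(e := 0) = c'(e := 0)"
    then have "c e = c' e"
      using fact_length_fun_upd_multiplicity[of c] fact_length_fun_upd_multiplicity[of c'] by simp
    with eq show "c = c'" by (metis fun_upd_triv fun_upd_upd)
  qed
  moreover have "(\<lambda>c. c(e := 0)) ` ?M \<subseteq> reps G w (n - ord_ns S n * e)"
    using factorization_to_blowup_rep(1) by force
  ultimately show ?thesis unfolding dmax_elem_def dD_def
    by (rule card_inj_on_le[OF _ _ finite_blowup_reps])
qed

lemma multiplicity_mem_blowup: "e \<in> B"
proof -
  have "(\<Sum>a\<in>G. (if a = e then 1 else 0) * w a) = (\<Sum>a\<in>G. if a = e then e else 0)"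
    by (rule sum.cong) (auto simp: blowup_weight_def)
  also have "\<dots> = e" using multiplicity_mem_mingens finite_mingens by simp
  finally have "(\<lambda>a. if a = e then 1 else 0) \<in> reps G w e"
    using multiplicity_mem_mingens by (auto simp: reps_def)
  then show ?thesis unfolding blowup_def by blast
qed

lemma blowup_shift: "x \<in> B \<Longrightarrow> x + e \<in> B"
  using blowup_add multiplicity_mem_blowup by blast

lemma finite_apery_blowup: "finite (apery B e)"
  using blowup_shift multiplicity_pos by (rule finite_apery)

lemma apery_blowup_rep_multiplicity_zero:
  assumes "v \<in> apery B e" and x: "x \<in> reps G w v"
  shows "x e = 0"
proof (rule ccontr)
  assume "x e \<noteq> 0"
  from reps_decrement[OF x finite_mingens multiplicity_mem_mingens] this
  have "v - e \<in> B" and "e \<le> v" by (auto simp: blowup_def blowup_weight_def)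
  with assms(1) show False by (simp add: apery_def)
qed

lemma dD_mono:
  assumes "preceq B b f"
  shows "dD S b \<le> dD S f"
proof -
  from assms obtain y where y: "y \<in> reps G w (f - b)" and "b + (f - b) = f"
    by (auto simp: preceq_def blowup_def)
  have "card (reps G w b) \<le> card (reps G w (b + (f - b)))"
    using finite_mingens blowup_weight_pos y by (rule card_reps_mono)
  with \<open>b + (f - b) = f\<close> show ?thesis by (simp add: dD_def)
qed

lemma blowup_rep_to_factorization:
  assumes x: "x \<in> reps G w f" and "x e = 0" and "fact_length S x \<le> K"
  defines "c \<equiv> x(e := K - fact_length S x)"
  shows "c \<in> factorizations S (f + K * e)" and "fact_length S c = K"
proof -
  have restore: "c(e := 0) = x" using \<open>x e = 0\<close> by (auto simp: c_def)
  then show len: "fact_length S c = K"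
    using fact_length_fun_upd_multiplicity[of c] \<open>fact_length S x \<le> K\<close> by (simp add: c_def)
  have "(\<Sum>a\<in>G. c a * a) = f + K * e"
    using factorization_sum_split[of c] restore len x by (simp add: reps_def)
  with x multiplicity_mem_mingens show "c \<in> factorizations S (f + K * e)"
    by (auto simp: factorizations_def reps_def c_def)
qed

lemma ord_ns_apery_lift:
  assumes f: "f \<in> apery B e" and x: "x \<in> reps G w f"
    and bound: "\<And>y. y \<in> reps G w f \<Longrightarrow> fact_length S y \<le> K"
  shows "f + K * e \<in> S" and "ord_ns S (f + K * e) = K"
proof -
  note lift = blowup_rep_to_factorization[OF x apery_blowup_rep_multiplicity_zero[OF f x] bound[OF x]]
  from lift(1) show m: "f + K * e \<in> S" by (rule mem_if_factorization)
  have "K \<le> ord_ns S (f + K * e)" using lift fact_length_le_ord_ns by metis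
  moreover have "\<not> K < ord_ns S (f + K * e)"
  proof
    assume "K < ord_ns S (f + K * e)"
    then obtain j where j: "ord_ns S (f + K * e) = K + j" "0 < j" by (metis less_imp_add_positive)
    obtain c where "c \<in> factorizations S (f + K * e)" "fact_length S c = K + j"
      using ord_ns_attained[OF m] j by metis
    from factorization_to_blowup_rep[OF this(1)] this(2)
    have "f - j * e \<in> B" and "j * e \<le> f" by (auto simp: blowup_def algebra_simps)
    with apery_diff_multiple_notin[OF blowup_shift f \<open>0 < j\<close>] show False by blast
  qed
  ultimately show "ord_ns S (f + K * e) = K" by simp
qed

lemma dD_le_dmax_elem:
  assumes f: "f \<in> apery B e"
  shows "\<exists>m\<in>S. dD S f \<le> dmax_elem S m"
proof -
  let ?R = "reps G w f"
  define K where "K = Max (fact_length S ` ?R)"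
  define lift where "lift x = x(e := K - fact_length S x)" for x :: "nat \<Rightarrow> nat"
  obtain x0 where x0: "x0 \<in> ?R" using f by (auto simp: apery_def blowup_def)
  have bound: "fact_length S y \<le> K" if "y \<in> ?R" for y
    unfolding K_def using that finite_blowup_reps by simp
  have ord: "f + K * e \<in> S" "ord_ns S (f + K * e) = K"
    using ord_ns_apery_lift[OF f x0] bound by blast+
  have "inj_on lift ?R"
  proof (rule inj_onI)
    fix x y assume "x \<in> ?R" "y \<in> ?R" "lift x = lift y"
    then show "x = y"
      using apery_blowup_rep_multiplicity_zero[OF f] unfolding lift_def
      by (metis fun_upd_triv fun_upd_upd)
  qed
  moreover have "lift ` ?R \<subseteq> {c \<in> factorizations S (f + K * e). fact_length S c = ord_ns S (f + K * e)}"
  proof (rule image_subsetI)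
    fix x assume x: "x \<in> ?R"
    show "lift x \<in> {c \<in> factorizations S (f + K * e). fact_length S c = ord_ns S (f + K * e)}"
      using blowup_rep_to_factorization[OF x apery_blowup_rep_multiplicity_zero[OF f x] bound[OF x]]
        ord(2) unfolding lift_def by simp
  qed
  ultimately have "dD S f \<le> dmax_elem S (f + K * e)"
    unfolding dD_def dmax_elem_def using finite_factorizations by (intro card_inj_on_le) auto
  with ord(1) show ?thesis by blast
qed

text \<open>Without a nonzero Apery element, maxAp(B;e) would be empty. The hypothesis supplies one:
  it carries an element of S congruent to 1 mod e into Ap(B;e).\<close>

lemma apery_blowup_nonzero:
  assumes "adj S = apery B e"
  shows "apery B e - {0} \<noteq> {}"
proof -
  obtain F where "\<forall>x>F. x \<in> S" using ex_conductor_bound by blast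
  moreover have "F + 1 \<le> (F + 1) * e" using mult_le_mono2[of 1 e "F + 1"] multiplicity_pos by simp
  then have "F < 1 + (F + 1) * e" by linarith
  ultimately have n: "1 + (F + 1) * e \<in> S" by blast
  define b where "b = 1 + (F + 1) * e - ord_ns S (1 + (F + 1) * e) * e"
  have "b \<in> apery B e" using n assms by (auto simp: adj_def b_def)
  moreover have "b mod e = 1"
  proof -
    have "b + ord_ns S (1 + (F + 1) * e) * e = 1 + (F + 1) * e"
      using ord_ns_mult_le[OF n] by (simp add: b_def)
    then have "b mod e = 1 mod e" by (metis mod_mult_self1)
    with two_le_multiplicity show ?thesis by simp
  qed
  ultimately show ?thesis by force
qed

end

theorem proposition4p2:
  fixes S :: "nat set"
  assumes "numerical_semigroup S"
    and "S \<noteq> UNIV"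
    and "adj S = apery (blowup S) (multiplicity_ns S)"
  shows "finite (dmax_elem S ` S) \<and>
         dmax_ns S = Max (dD S ` maxAp (blowup S) (multiplicity_ns S))"
proof -
  interpret proper_numerical_semigroup S using assms(1,2) by unfold_locales
  have below_maxAp: "\<exists>f\<in>maxAp B e. preceq B b f" if "b \<in> apery B e" for b
    using ex_maxAp_above[OF finite_apery_blowup zero_mem_blowup blowup_add
        apery_blowup_nonzero[OF assms(3)] that] .
  have "finite (maxAp B e)"
    using finite_apery_blowup by (rule finite_subset[rotated]) (auto simp: maxAp_def)
  moreover have "maxAp B e \<noteq> {}"
    using below_maxAp apery_blowup_nonzero[OF assms(3)] by blast
  moreover have "\<exists>d\<in>dD S ` maxAp B e. dmax_elem S n \<le> d" if "n \<in> S" for n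
  proof -
    have "n - ord_ns S n * e \<in> apery B e" using that assms(3) by (auto simp: adj_def)
    then obtain f where "f \<in> maxAp B e" "preceq B (n - ord_ns S n * e) f"
      using below_maxAp by blast
    with le_trans[OF dmax_elem_le_dD dD_mono] show ?thesis by blast
  qed
  moreover have "\<exists>d\<in>dmax_elem S ` S. dD S f \<le> d" if "f \<in> maxAp B e" for f
    using that dD_le_dmax_elem by (auto simp: maxAp_def)
  ultimately show ?thesis
    unfolding dmax_ns_def using zero_mem by (intro finite_Max_eq_if_cofinal) auto
qed

end
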